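(* Let $Q\subseteq M$ be nonempty, let $y\in Q$, and let $A_0=\max_{q\in Q}d(y,q)$; assume $A_0>0$ and let $i$ be the integer with $2^{i-1}<A_0\le 2^i$. Let $a\in M$ minimize $\max_{q\in Q}d(z,q)$ over $z\in M$. Let $y_i$ be the level-$i$ ancestor of $y$ and $a_{i-1}$ the level-$(i-1)$ ancestor of $a$. Then $a_{i-1}\in L_{y_i,i,6}$, i.e. $d(a_{i-1},y_i)\le 6\cdot 2^i$.
   Context: $(M,d)$ is a finite metric space with at least two points whose minimum interpoint distance is $1$; let $i_{\mathrm{top}}=\lceil\log_2\operatorname{diam}(M)\rceil$. Net hierarchy: $Y_0=M$, and for $i=1,\dots,i_{\mathrm{top}}$, $Y_i\subseteq Y_{i-1}$ is a $2^i$-net of $Y_{i-1}$, i.e. any two distinct points of $Y_i$ are at distance $\ge 2^i$ and every point of $Y_{i-1}$ is at distance $<2^i$ from some point of $Y_i$. By convention $Y_i=M$ for all integers $i<0$. The tree $T$ has nodes $(y,i)$ for integers $i\le i_{\mathrm{top}}$ and $y\in Y_i$. For $1\le i\le i_{\mathrm{top}}$, each node $(z,i-1)$ has as parent a node $(y,i)$ with $y\in Y_i$ and $d(y,z)\le 2^i$ (chosen to be $(z,i)$ when $z\in Y_i$). For $i\le 0$, the parent of $(x,i-1)$ is $(x,i)$. For $x\in M$ and an integer $l\le i_{\mathrm{top}}$, the level-$l$ ancestor of $x$ is the point $w\in Y_l$ such that $(w,l)$ is an ancestor of $(x,0)$ in $T$ if $l\ge0$, and is $x$ itself if $l<0$.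 For $y\in Y_i$ and $c\ge1$, $L_{y,i,c}=\{z\in Y_{i-1}: d(y,z)\le c\,2^i\}$. *)

theory Defs
  imports "HOL-Analysis.Analysis"
begin

definition metric_on :: "'a set \<Rightarrow> ('a \<Rightarrow> 'a \<Rightarrow> real) \<Rightarrow> bool" where
  "metric_on M d \<longleftrightarrow>
     (\<forall>x\<in>M. \<forall>y\<in>M. d x y \<ge> 0 \<and> (d x y = 0 \<longleftrightarrow> x = y) \<and> d x y = d y x) \<and>
     (\<forall>x\<in>M. \<forall>y\<in>M. \<forall>z\<in>M. d x z \<le> d x y + d y z)"

definition diam :: "'a set \<Rightarrow> ('a \<Rightarrow> 'a \<Rightarrow> real) \<Rightarrow> real" where
  "diam M d = Max {d x y | x y. x \<in> M \<and> y \<in> M}"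

definition itop :: "'a set \<Rightarrow> ('a \<Rightarrow> 'a \<Rightarrow> real) \<Rightarrow> int" where
  "itop M d = \<lceil>log 2 (diam M d)\<rceil>"

definition net_hierarchy :: "'a set \<Rightarrow> ('a \<Rightarrow> 'a \<Rightarrow> real) \<Rightarrow> (nat \<Rightarrow> 'a set) \<Rightarrow> bool" where
  "net_hierarchy M d Y \<longleftrightarrow> Y 0 = M \<and>
     (\<forall>i::nat. 1 \<le> i \<and> int i \<le> itop M d \<longrightarrow>
        Y i \<subseteq> Y (i - 1) \<and>
        (\<forall>p\<in>Y i. \<forall>q\<in>Y i. p \<noteq> q \<longrightarrow> d p q \<ge> 2 ^ i) \<and>
        (\<forall>z\<in>Y (i - 1). \<exists>y\<in>Y i. d y z < 2 ^ i))"

text \<open>Parent map of the tree: par i z is the point y with (y,i) the parent of (z,i-1),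
  for 1 <= i <= i_top.  (Below level 0 the parent of (x,i-1) is (x,i).)\<close>
definition parent_map :: "'a set \<Rightarrow> ('a \<Rightarrow> 'a \<Rightarrow> real) \<Rightarrow> (nat \<Rightarrow> 'a set) \<Rightarrow> (nat \<Rightarrow> 'a \<Rightarrow> 'a) \<Rightarrow> bool" where
  "parent_map M d Y par \<longleftrightarrow>
     (\<forall>i::nat. 1 \<le> i \<and> int i \<le> itop M d \<longrightarrow>
        (\<forall>z\<in>Y (i - 1). par i z \<in> Y i \<and> d (par i z) z \<le> 2 ^ i \<and> (z \<in> Y i \<longrightarrow> par i z = z)))"

fun anc_nat :: "(nat \<Rightarrow> 'a \<Rightarrow> 'a) \<Rightarrow> nat \<Rightarrow> 'a \<Rightarrow> 'a" where
  "anc_nat par 0 x = x"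
| "anc_nat par (Suc l) x = par (Suc l) (anc_nat par l x)"

definition ancestor :: "(nat \<Rightarrow> 'a \<Rightarrow> 'a) \<Rightarrow> int \<Rightarrow> 'a \<Rightarrow> 'a" where
  "ancestor par l x = (if l < 0 then x else anc_nat par (nat l) x)"

definition level :: "'a set \<Rightarrow> (nat \<Rightarrow> 'a set) \<Rightarrow> int \<Rightarrow> 'a set" where
  "level M Y i = (if i < 0 then M else Y (nat i))"

definition Lset :: "'a set \<Rightarrow> ('a \<Rightarrow> 'a \<Rightarrow> real) \<Rightarrow> (nat \<Rightarrow> 'a set) \<Rightarrow> 'a \<Rightarrow> int \<Rightarrow> real \<Rightarrow> 'a set" where
  "Lset M d Y y i c = {z \<in> level M Y (i - 1). d y z \<le> c * 2 powr (real_of_int i)}"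

end

theory Submission
  imports Defs
begin

(* Write y_i for the level-i ancestor of y and a' for the level-(i-1)
   ancestor of a.  Climbing one level l of the tree moves a point by at most 2^l, so
   by a geometric sum the level-l ancestor of x lies within 2^(l+1) of x.  Since a
   minimises the radius max_q d(.,q) of Q, its radius is at most the radius A0 of y,
   hence d(a,y) <= A0 <= 2^i.  The triangle inequality along y_i, y, a, a' gives
     d(y_i, a') <= 2^(i+1) + 2^i + 2^i = 4 * 2^i <= 6 * 2^i.
   The only bookkeeping left is to know that all levels used exist, i.e. i <= i_top;
   this follows from 2^(i-1) < A0 <= diam M. *)

lemma metric_on_triangle:
  "metric_on M d \<Longrightarrow> u \<in> M \<Longrightarrow> v \<in> M \<Longrightarrow> w \<in> M \<Longrightarrow> d u w \<le> d u v + d v w"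
  unfolding metric_on_def by blast

lemma metric_on_sym: "metric_on M d \<Longrightarrow> u \<in> M \<Longrightarrow> v \<in> M \<Longrightarrow> d u v = d v u"
  unfolding metric_on_def by blast

lemma metric_on_refl: "metric_on M d \<Longrightarrow> u \<in> M \<Longrightarrow> d u u = 0"
  unfolding metric_on_def by blast

lemma net_hierarchy_level_subset:
  assumes "net_hierarchy M d Y" and "1 \<le> l" and "int l \<le> itop M d"
  shows "Y l \<subseteq> Y (l - 1)"
  using assms unfolding net_hierarchy_def by blast

lemma parent_map_step:
  assumes "parent_map M d Y par" and "1 \<le> l" and "int l \<le> itop M d" and "z \<in> Y (l - 1)"
  shows "par l z \<in> Y l" and "d (par l z) z \<le> 2 ^ l"
  using assms unfolding parent_map_def by blast+

lemma anc_nat_props: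
  fixes d :: "'a \<Rightarrow> 'a \<Rightarrow> real"
  assumes met: "metric_on M d" and net: "net_hierarchy M d Y"
    and par: "parent_map M d Y par" and xM: "x \<in> M"
  shows "int l \<le> itop M d \<Longrightarrow>
           Y l \<subseteq> M \<and> anc_nat par l x \<in> Y l \<and> d (anc_nat par l x) x \<le> 2 ^ (l + 1) - 2"
proof (induction l)
  case 0
  have "Y 0 = M" using net unfolding net_hierarchy_def by blast
  then show ?case using xM metric_on_refl[OF met xM] by simp
next
  case (Suc l)
  let ?z = "anc_nat par l x"
  let ?p = "par (Suc l) ?z"
  have IH: "Y l \<subseteq> M" "?z \<in> Y l" "d ?z x \<le> 2 ^ (l + 1) - 2"
    using Suc by auto
  have level: "1 \<le> Suc l" "int (Suc l) \<le> itop M d" using Suc.prems by simp_all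
  have sub: "Y (Suc l) \<subseteq> Y l"
    using net_hierarchy_level_subset[OF net level] by simp
  have pY: "?p \<in> Y (Suc l)" and pz: "d ?p ?z \<le> 2 ^ Suc l"
    using parent_map_step[OF par level] IH(2) by simp_all
  have "d ?p x \<le> d ?p ?z + d ?z x"
    using metric_on_triangle[OF met] pY sub IH xM by blast
  also have "\<dots> \<le> 2 ^ (Suc l + 1) - 2" using pz IH(3) by simp
  finally show ?case using sub IH pY by auto
qed

(* The same fact for the integer-indexed ancestor, with the cruder bound 2^(l+1),
   which also covers the levels l < 0 where the ancestor is x itself. *)
lemma ancestor_props:
  fixes d :: "'a \<Rightarrow> 'a \<Rightarrow> real"
  assumes met: "metric_on M d" and net: "net_hierarchy M d Y"
    and par: "parent_map M d Y par" and xM: "x \<in> M" and l: "l \<le> itop M d"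
  shows "ancestor par l x \<in> level M Y l" and "ancestor par l x \<in> M"
    and "d (ancestor par l x) x \<le> 2 powr (real_of_int l + 1)"
proof -
  have "ancestor par l x \<in> level M Y l \<and> ancestor par l x \<in> M \<and>
        d (ancestor par l x) x \<le> 2 powr (real_of_int l + 1)"
  proof (cases "l < 0")
    case True
    then show ?thesis using xM metric_on_refl[OF met xM] unfolding ancestor_def level_def by simp
  next
    case False
    have "Y (nat l) \<subseteq> M" "anc_nat par (nat l) x \<in> Y (nat l)"
      "d (anc_nat par (nat l) x) x \<le> 2 ^ (nat l + 1) - 2"
      using anc_nat_props[OF met net par xM] False l by auto
    moreover have "(2::real) ^ (nat l + 1) = 2 powr (real_of_int l + 1)"
    proof -
      have "(2::real) ^ (nat l + 1) = 2 powr real (nat l + 1)"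
        by (rule powr_realpow[symmetric]) simp
      also have "real (nat l + 1) = real_of_int l + 1" using False by simp
      finally show ?thesis .
    qed
    ultimately show ?thesis using False unfolding ancestor_def level_def by auto
  qed
  then show "ancestor par l x \<in> level M Y l" "ancestor par l x \<in> M"
    "d (ancestor par l x) x \<le> 2 powr (real_of_int l + 1)" by auto
qed

lemma dist_le_diam:
  assumes "finite M" and "x \<in> M" and "z \<in> M"
  shows "d x z \<le> diam M d"
proof -
  have "{d x z | x z. x \<in> M \<and> z \<in> M} = (\<lambda>(x, z). d x z) ` (M \<times> M)" by auto
  then have "finite {d x z | x z. x \<in> M \<and> z \<in> M}" using assms(1) by simp
  then show ?thesis unfolding diam_def using assms by (intro Max_ge) auto
qed

lemma level_le_itop:
  assumes "finite M" and "x \<in> M" and "z \<in> M" and "2 powr (real_of_int i - 1) < d x z"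
  shows "i \<le> itop M d"
proof -
  have big: "2 powr (real_of_int i - 1) < diam M d"
    using dist_le_diam[OF assms(1-3), of d] assms(4) by linarith
  moreover have "0 < diam M d" using big by (smt (verit) powr_gt_zero)
  ultimately have "real_of_int i - 1 < log 2 (diam M d)"
    by (simp add: less_log_iff)
  also have "\<dots> \<le> real_of_int (itop M d)" unfolding itop_def by simp
  finally show ?thesis by linarith
qed

lemma minimax_centre_close:
  assumes "finite Q" and "y \<in> Q" and "y \<in> M"
    and "\<forall>z\<in>M. Max ((\<lambda>q. d a q) ` Q) \<le> Max ((\<lambda>q. d z q) ` Q)"
  shows "d a y \<le> Max ((\<lambda>q. d y q) ` Q)"
proof -
  have "d a y \<le> Max ((\<lambda>q. d a q) ` Q)" using assms(1,2) by (intro Max_ge) auto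
  also have "\<dots> \<le> Max ((\<lambda>q. d y q) ` Q)" using assms(3,4) by blast
  finally show ?thesis .
qed

theorem mainTheorem6:
  fixes M :: "'a set" and d :: "'a \<Rightarrow> 'a \<Rightarrow> real"
    and Y :: "nat \<Rightarrow> 'a set" and par :: "nat \<Rightarrow> 'a \<Rightarrow> 'a"
    and Q :: "'a set" and y a :: 'a and i :: int
  assumes fin: "finite M" and two: "card M \<ge> 2"
    and met: "metric_on M d"
    and mind: "\<forall>x\<in>M. \<forall>z\<in>M. x \<noteq> z \<longrightarrow> d x z \<ge> 1"
    and mind1: "\<exists>x\<in>M. \<exists>z\<in>M. x \<noteq> z \<and> d x z = 1"
    and net: "net_hierarchy M d Y"
    and par: "parent_map M d Y par"
    and QM: "Q \<subseteq> M" and Qne: "Q \<noteq> {}" and yQ: "y \<in> Q"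
    and A0pos: "Max ((\<lambda>q. d y q) ` Q) > 0"
    and ilow: "2 powr (real_of_int i - 1) < Max ((\<lambda>q. d y q) ` Q)"
    and iup: "Max ((\<lambda>q. d y q) ` Q) \<le> 2 powr (real_of_int i)"
    and aM: "a \<in> M"
    and amin: "\<forall>z\<in>M. Max ((\<lambda>q. d a q) ` Q) \<le> Max ((\<lambda>q. d z q) ` Q)"
  shows "ancestor par (i - 1) a \<in> Lset M d Y (ancestor par i y) i 6"
proof -
  let ?yi = "ancestor par i y" and ?a' = "ancestor par (i - 1) a"
  have finQ: "finite Q" using fin QM finite_subset by blast
  have yM: "y \<in> M" using yQ QM by blast
  have "Max ((\<lambda>q. d y q) ` Q) \<in> (\<lambda>q. d y q) ` Q" using finQ Qne by (intro Max_in) auto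
  then obtain q where "q \<in> Q" and "d y q = Max ((\<lambda>q. d y q) ` Q)" by auto
  then have i_top: "i \<le> itop M d"
    using level_le_itop[OF fin yM, of q i d] QM ilow by auto
  have yi: "?yi \<in> M" "d ?yi y \<le> 2 * 2 powr real_of_int i"
    using ancestor_props[OF met net par yM i_top] by (simp_all add: powr_add)
  have a': "?a' \<in> level M Y (i - 1)" "?a' \<in> M" "d ?a' a \<le> 2 powr real_of_int i"
    using ancestor_props[OF met net par aM, of "i - 1"] i_top by auto
  have ay: "d a y \<le> 2 powr real_of_int i"
    using minimax_centre_close[OF finQ yQ yM amin] iup by linarith
  have "d ?yi ?a' \<le> d ?yi y + d y a + d a ?a'"
    using metric_on_triangle[OF met] yi(1) yM aM a'(2) by (smt (verit))
  also have "\<dots> \<le> 6 * 2 powr real_of_int i"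
    using yi(2) ay a'(3) metric_on_sym[OF met] yM aM a'(2) by (smt (verit) powr_ge_zero)
  finally show ?thesis unfolding Lset_def using a'(1) by simp
qed

end
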